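(* Let $f\colon \mathbb{R}^n \times \mathbb{R}^p \rightarrow \overline{\mathbb{R}}$ be a proper nearly convex function and $G\colon \mathbb{R}^n \rightrightarrows \mathbb{R}^p$ a nearly convex set-valued mapping. Let $m(x)=\inf\{f(x,y)\mid y\in G(x)\}$ (with $\inf\emptyset=\infty$), and assume $m$ is finite at $\bar x \in \mathbb{R}^n$. For $\eta>0$ let $S_\eta(\bar x)= \{ y \in G(\bar x) \mid f (\bar x, y) \le m (\bar x)+\eta \}$, and for $\varepsilon,\eta\ge0$ let $\varGamma(\eta+\varepsilon)=\{(\gamma_1, \gamma_2) \mid \gamma_1 \ge 0,\ \gamma_2 \ge 0,\ \gamma_1+\gamma_2=\eta+\varepsilon\}$. If $$\mathrm{ri}(\mathrm{dom}\, f ) \cap \mathrm{ri}(\mathrm{gph}\, G ) \neq\emptyset,$$ then for every $\varepsilon \ge 0$, $$\begin{aligned}\partial _\varepsilon m(\bar x)&=\bigcap_{\eta >0}\ \bigcap_{ y \in S_\eta (\bar x)}\ \bigcup_{(\gamma_1, \gamma_2) \in \varGamma(\eta+\varepsilon)}\big\{\xi\in \mathbb{R}^n \mid (\xi,0) \in \partial_{\gamma_1}f(\bar x,y) +N_{\gamma_2}((\bar x, y); \mathrm{gph}\, G ) \big\}\\ &=\bigcap_{\eta >0}\ \bigcup_{y \in \mathbb{R}^p}\ \bigcup_{(\gamma_1, \gamma_2) \in \varGamma(\eta+\varepsilon)}\big\{\xi \in \mathbb{R}^n \mid (\xi,0) \in \partial_{\gamma_1}f(\bar x, y) +N_{\gamma_2}((\bar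 x, y); \mathrm{gph}\, G ) \big\}.\end{aligned}$$
   Context: $\overline{\mathbb{R}}=[-\infty,\infty]$; proper means nonempty domain $\mathrm{dom}\,f=\{z\mid f(z)<\infty\}$ and never $-\infty$. A set $D$ is nearly convex if there is a convex $E$ with $E\subset D\subset\overline{E}$; a function is nearly convex if its epigraph is nearly convex; a set-valued mapping is nearly convex if its graph $\mathrm{gph}\,G=\{(x,y)\mid y\in G(x)\}$ is nearly convex. $\mathrm{ri}\,D=\{a\in D\mid\exists\delta>0,\ B(a;\delta)\cap\mathrm{aff}\,D\subset D\}$. For $\psi$ on $\mathbb{R}^k$, $\gamma\ge0$ and $\bar z$ with $\psi(\bar z)$ finite, $\partial_\gamma\psi(\bar z)=\{\zeta\mid\langle\zeta,z-\bar z\rangle-\gamma\le\psi(z)-\psi(\bar z)\ \forall z\}$ (the set-builder conditions are understood for those $y$ at which these objects are defined). For nonempty $\Omega$ and $\bar z\in\Omega$, $N_\gamma(\bar z;\Omega)=\{\zeta\mid\langle\zeta,z-\bar z\rangle\le\gamma\ \forall z\in\Omega\}$. Sums of sets are Minkowski sums. *)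

theory Defs
  imports "HOL-Analysis.Analysis"
begin

definition edom :: "('a \<Rightarrow> ereal) \<Rightarrow> 'a set" where
  "edom f = {z. f z < \<infinity>}"

definition proper_fun :: "('a \<Rightarrow> ereal) \<Rightarrow> bool" where
  "proper_fun f \<longleftrightarrow> edom f \<noteq> {} \<and> (\<forall>z. f z \<noteq> -\<infinity>)"

definition epigraph :: "('a \<Rightarrow> ereal) \<Rightarrow> ('a \<times> real) set" where
  "epigraph f = {(z, t). f z \<le> ereal t}"

definition nearly_convex :: "'a::real_normed_vector set \<Rightarrow> bool" where
  "nearly_convex D \<longleftrightarrow> (\<exists>E. convex E \<and> E \<subseteq> D \<and> D \<subseteq> closure E)"

definition nearly_convex_fun :: "('a::real_normed_vector \<Rightarrow> ereal) \<Rightarrow> bool" where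
  "nearly_convex_fun f \<longleftrightarrow> nearly_convex (epigraph f)"

definition gph :: "('a \<Rightarrow> 'b set) \<Rightarrow> ('a \<times> 'b) set" where
  "gph G = {(x, y). y \<in> G x}"

definition nearly_convex_map :: "('a::real_normed_vector \<Rightarrow> 'b::real_normed_vector set) \<Rightarrow> bool" where
  "nearly_convex_map G \<longleftrightarrow> nearly_convex (gph G)"

definition marginal :: "('a \<times> 'b \<Rightarrow> ereal) \<Rightarrow> ('a \<Rightarrow> 'b set) \<Rightarrow> 'a \<Rightarrow> ereal" where
  "marginal f G x = Inf {f (x, y) | y. y \<in> G x}"

definition eps_subdiff :: "('k::real_inner \<Rightarrow> ereal) \<Rightarrow> real \<Rightarrow> 'k \<Rightarrow> 'k set" where
  "eps_subdiff \<psi> \<gamma> zb =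
     (if \<bar>\<psi> zb\<bar> \<noteq> \<infinity>
      then {\<zeta>. \<forall>z. ereal (inner \<zeta> (z - zb) - \<gamma>) \<le> \<psi> z - \<psi> zb}
      else {})"

definition eps_normal :: "real \<Rightarrow> 'k::real_inner \<Rightarrow> 'k set \<Rightarrow> 'k set" where
  "eps_normal \<gamma> zb \<Omega> =
     (if zb \<in> \<Omega> then {\<zeta>. \<forall>z\<in>\<Omega>. inner \<zeta> (z - zb) \<le> \<gamma>} else {})"

definition Gamma_set :: "real \<Rightarrow> (real \<times> real) set" where
  "Gamma_set s = {(g1, g2). g1 \<ge> 0 \<and> g2 \<ge> 0 \<and> g1 + g2 = s}"

definition S_eta :: "('a \<times> 'b \<Rightarrow> ereal) \<Rightarrow> ('a \<Rightarrow> 'b set) \<Rightarrow> real \<Rightarrow> 'a \<Rightarrow> 'b set" where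
  "S_eta f G \<eta> xb = {y \<in> G xb. f (xb, y) \<le> marginal f G xb + ereal \<eta>}"

end

theory Submission
  imports Defs
begin

(* Write \<psi> = f + \<delta>_gph G. If \<xi> is an \<epsilon>-subgradient of the marginal function m at x,
  then (\<xi>, 0) is an (\<eta> + \<epsilon>)-subgradient of \<psi> at (x, y) for every \<eta>-optimal y; conversely it
  suffices that for every \<eta> > 0 this holds for some y. Under the qualification condition the
  \<gamma>-subdifferential of \<psi> is the union of \<partial>_g1 f + N_g2(gph G) over g1 + g2 = \<gamma>. For the
  nontrivial inclusion take convex E1 \<subseteq> epi f \<subseteq> cl E1 and E2 \<subseteq> gph G \<subseteq> cl E2 and properly
  separate the origin from {(z1 - z2, h(z1, s) + r) | (z1, s) \<in> E1, z2 \<in> E2, r > 0}, where the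
  height h is nonnegative over gph G by the subgradient inequality. Because the relative
  interiors of dom f and gph G meet, the separating functional has a positive vertical
  component; normalised, its horizontal part is the normal vector, and its best bound on
  gph G is g2. *)

lemma proper_separation_origin:
  fixes C :: "'a::euclidean_space set"
  assumes "convex C" and "C \<noteq> {}" and "0 \<notin> rel_interior C"
  shows "\<exists>a. (\<forall>x\<in>C. 0 \<le> a \<bullet> x) \<and> (\<exists>x\<in>C. 0 < a \<bullet> x)"
proof (cases "0 \<in> closure C")
  case True
  have ri: "rel_interior (closure C) = rel_interior C"
    using assms(1) by (rule convex_rel_interior_closure)
  have "convex (closure C)"
    using assms(1) by (rule convex_closure)
  moreover note True
  moreover have "0 \<notin> rel_interior (closure C)"
    using assms(3) ri by simp
  ultimately obtain a where "a \<noteq> 0" and ge: "\<And>y. y \<in> closure C \<Longrightarrow> a \<bullet> 0 \<le> a \<bullet> y"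
    and gt: "\<And>y. y \<in> rel_interior (closure C) \<Longrightarrow> a \<bullet> 0 < a \<bullet> y"
    by (rule supporting_hyperplane_rel_boundary) blast
  obtain x where x: "x \<in> rel_interior C"
    using assms(1,2) rel_interior_eq_empty by blast
  have "\<forall>y\<in>C. 0 \<le> a \<bullet> y"
    using ge closure_subset by auto
  moreover have "x \<in> C" and "0 < a \<bullet> x"
    using x gt ri rel_interior_subset by auto
  ultimately show ?thesis
    by blast
next
  case False
  then obtain a b where "0 < b" and "\<forall>x\<in>closure C. b < a \<bullet> x"
    using separating_hyperplane_closed_0[of "closure C"] assms(1) by auto
  then have "\<forall>x\<in>C. 0 < a \<bullet> x"
    using closure_subset by force
  then show ?thesis
    using assms(2) by (meson ex_in_conv less_imp_le)
qed

lemma rel_interior_min_inner_const: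
  fixes S :: "'a::euclidean_space set"
  assumes "convex S" and "z \<in> rel_interior S" and "\<And>x. x \<in> S \<Longrightarrow> u \<bullet> z \<le> u \<bullet> x"
    and "x \<in> S"
  shows "u \<bullet> x = u \<bullet> z"
proof -
  have face: "(S \<inter> {x. u \<bullet> x = u \<bullet> z}) face_of S"
    using exposed_face_of_Int_supporting_hyperplane_ge[where a = u and b = "u \<bullet> z"] assms(1,3)
    by (simp add: exposed_face_of_def)
  have "z \<in> S \<inter> {x. u \<bullet> x = u \<bullet> z}"
    using assms(2) rel_interior_subset by blast
  then have "S \<inter> {x. u \<bullet> x = u \<bullet> z} = S"
    using face_of_disjoint_rel_interior[OF face] assms(2) by blast
  then show ?thesis
    using assms(4) by blast
qed

lemma improper_separation_rel_interior:
  fixes A B :: "'a::euclidean_space set"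
  assumes "convex A" and "convex B" and "rel_interior A \<inter> rel_interior B \<noteq> {}"
    and sep: "\<And>a b. a \<in> A \<Longrightarrow> b \<in> B \<Longrightarrow> u \<bullet> b \<le> u \<bullet> a"
    and "a \<in> A" and "b \<in> B"
  shows "u \<bullet> a = u \<bullet> b"
proof -
  obtain z where zA: "z \<in> rel_interior A" and zB: "z \<in> rel_interior B"
    using assms(3) by blast
  have "z \<in> A" and "z \<in> B"
    using zA zB rel_interior_subset by auto
  have "u \<bullet> a = u \<bullet> z"
    by (rule rel_interior_min_inner_const[OF assms(1) zA sep[OF _ \<open>z \<in> B\<close>] assms(5)])
  moreover have "-u \<bullet> b = -u \<bullet> z"
    using sep[OF \<open>z \<in> A\<close>]
    by (intro rel_interior_min_inner_const[OF assms(2) zB _ assms(6)]) simp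
  ultimately show ?thesis
    by simp
qed

lemma rel_interior_nearly_convex_subset:
  fixes D E :: "'a::euclidean_space set"
  assumes "convex E" and "E \<subseteq> D" and "D \<subseteq> closure E"
  shows "rel_interior D \<subseteq> rel_interior E"
proof -
  have "affine hull D = affine hull E"
    by (metis assms(2,3) closure_same_affine_hull hull_mono subset_antisym)
  then have "rel_interior D \<subseteq> rel_interior (closure E)"
    using subset_rel_interior[OF assms(3)] by simp
  then show ?thesis
    using convex_rel_interior_closure[OF assms(1)] by simp
qed

lemma rel_interior_edom_subset:
  fixes E :: "('a::euclidean_space \<times> real) set"
  assumes "convex E" and "E \<subseteq> epigraph \<phi>" and "epigraph \<phi> \<subseteq> closure E"
  shows "rel_interior (edom \<phi>) \<subseteq> rel_interior (fst ` E)"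
proof (rule rel_interior_nearly_convex_subset)
  show "convex (fst ` E)"
    using assms(1) by (rule convex_linear_image[OF linear_fst])
  show "fst ` E \<subseteq> edom \<phi>"
    using assms(2) by (force simp: epigraph_def edom_def)
  show "edom \<phi> \<subseteq> closure (fst ` E)"
  proof
    fix z assume "z \<in> edom \<phi>"
    then obtain s where "\<phi> z \<le> ereal s"
      unfolding edom_def by (cases "\<phi> z") auto
    then have "(z, s) \<in> closure E"
      using assms(3) by (auto simp: epigraph_def)
    moreover have "fst ` closure E \<subseteq> closure (fst ` E)"
      by (rule closure_linear_image_subset[OF linear_fst])
    ultimately show "z \<in> closure (fst ` E)"
      by force
  qed
qed

lemma convex_shear_image:
  fixes E :: "('a::real_inner \<times> real) set"
  assumes "convex E"
  shows "convex ((\<lambda>(z, s). (z, s + a \<bullet> z + b)) ` E)"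
proof -
  have shear: "(\<lambda>(z, s). (z, s + a \<bullet> z + b)) ` E = (+) (0, b) ` ((\<lambda>(z, s). (z, s + a \<bullet> z)) ` E)"
    by (force simp: image_image)
  have "linear (\<lambda>(z, s). (z, s + a \<bullet> z))"
    by (auto simp: linear_iff inner_add_right distrib_left)
  then have "convex ((\<lambda>(z, s). (z, s + a \<bullet> z)) ` E)"
    using assms by (rule convex_linear_image)
  then show ?thesis
    unfolding shear by (rule convex_translation)
qed

lemma nonneg_slope_if_nonneg_on_pos:
  fixes a \<tau> :: real
  assumes "\<And>r. 0 < r \<Longrightarrow> 0 \<le> a + \<tau> * r"
  shows "0 \<le> \<tau>"
proof (rule ccontr)
  assume "\<not> 0 \<le> \<tau>"
  then have "0 \<le> a + \<tau> * ((\<bar>a\<bar> + 1) / - \<tau>)"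
    by (intro assms divide_pos_pos) auto
  also have "\<dots> = a - \<bar>a\<bar> - 1"
    using \<open>\<not> 0 \<le> \<tau>\<close> by (simp add: field_simps)
  finally show False
    by linarith
qed

lemma convex_decoupling_separator:
  fixes F :: "('a::euclidean_space \<times> real) set" and E :: "'a set"
  assumes "convex F" and "convex E" and "(z0, t0) \<in> F" and "z0 \<in> E"
    and nonneg: "\<And>z t. (z, t) \<in> F \<Longrightarrow> z \<in> E \<Longrightarrow> 0 \<le> t"
  shows "\<exists>u \<tau>. (\<forall>z1 t z2 r. (z1, t) \<in> F \<longrightarrow> z2 \<in> E \<longrightarrow> 0 < r \<longrightarrow> 0 \<le> u \<bullet> (z1 - z2) + \<tau> * (t + r))
    \<and> (\<exists>z1 t z2 r. (z1, t) \<in> F \<and> z2 \<in> E \<and> 0 < u \<bullet> (z1 - z2) + \<tau> * (t + r))"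
proof -
  define C where "C = F + (uminus ` E \<times> {0<..})"
  have C_intro: "(z1 - z2, t + r) \<in> C" if "(z1, t) \<in> F" and "z2 \<in> E" and "0 < r" for z1 t z2 r
  proof -
    have "(z1, t) + (- z2, r) \<in> C"
      unfolding C_def using that by (intro set_plus_intro SigmaI imageI) auto
    then show ?thesis
      by simp
  qed
  have C_elim: "\<exists>z1 t z2 r. (z1, t) \<in> F \<and> z2 \<in> E \<and> 0 < r \<and> p = (z1 - z2, t + r)"
    if "p \<in> C" for p
  proof -
    have "p \<in> F + (uminus ` E \<times> {0<..})"
      using that unfolding C_def .
    then obtain q w where "q \<in> F" and "w \<in> uminus ` E \<times> {0<..}" and "p = q + w"
      by (rule set_plus_elim)
    then show ?thesis
      by (cases q) force
  qed
  have "convex (uminus ` E \<times> {0::real<..})"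
    using convex_Times[OF convex_negations[OF assms(2)] convex_real_interval(3)] by simp
  then have "convex C"
    unfolding C_def by (rule convex_set_plus[OF assms(1)])
  moreover have "C \<noteq> {}"
    using C_intro[OF assms(3,4), of 1] by auto
  moreover have "0 \<notin> rel_interior C"
  proof
    assume "0 \<in> rel_interior C"
    then obtain z1 t z2 r where "(z1, t) \<in> F" "z2 \<in> E" "0 < r" "(0, 0) = (z1 - z2, t + r)"
      using C_elim rel_interior_subset by (metis subsetD zero_prod_def)
    then show False
      using nonneg[of z1 t] by simp
  qed
  ultimately have "\<exists>a. (\<forall>p\<in>C. 0 \<le> a \<bullet> p) \<and> (\<exists>p\<in>C. 0 < a \<bullet> p)"
    by (rule proper_separation_origin)
  then obtain a where a_ge: "\<forall>p\<in>C. 0 \<le> a \<bullet> p" and a_gt: "\<exists>p\<in>C. 0 < a \<bullet> p"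
    by blast
  obtain u \<tau> where a: "a = (u, \<tau>)"
    by (cases a)
  have inner_a: "a \<bullet> (z1 - z2, t + r) = u \<bullet> (z1 - z2) + \<tau> * (t + r)" for z1 z2 t r
    by (simp add: a inner_Pair)
  have "0 \<le> u \<bullet> (z1 - z2) + \<tau> * (t + r)" if "(z1, t) \<in> F" and "z2 \<in> E" and "0 < r" for z1 t z2 r
    using C_intro[OF that] a_ge inner_a by metis
  moreover have "\<exists>z1 t z2 r. (z1, t) \<in> F \<and> z2 \<in> E \<and> 0 < u \<bullet> (z1 - z2) + \<tau> * (t + r)"
    using a_gt C_elim inner_a by metis
  ultimately show ?thesis
    by blast
qed

lemma decoupling_separator_vertical_pos:
  fixes F :: "('a::euclidean_space \<times> real) set" and E :: "'a set"
  assumes "convex F" and "convex E"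
    and ri: "rel_interior (fst ` F) \<inter> rel_interior E \<noteq> {}"
    and sep: "\<forall>z1 t z2 r. (z1, t) \<in> F \<longrightarrow> z2 \<in> E \<longrightarrow> 0 < r \<longrightarrow> 0 \<le> u \<bullet> (z1 - z2) + \<tau> * (t + r)"
    and "(z1', t') \<in> F" and "z2' \<in> E" and strict: "0 < u \<bullet> (z1' - z2') + \<tau> * (t' + r')"
  shows "0 < \<tau>"
proof -
  have "0 \<le> \<tau>"
  proof (rule nonneg_slope_if_nonneg_on_pos)
    fix r :: real assume "0 < r"
    show "0 \<le> u \<bullet> (z1' - z2') + \<tau> * t' + \<tau> * r"
      using sep \<open>(z1', t') \<in> F\<close> \<open>z2' \<in> E\<close> \<open>0 < r\<close> by (simp add: distrib_left add.assoc)
  qed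
  moreover have "\<tau> \<noteq> 0"
  proof
    (* otherwise u would properly separate fst ` F from E, whose relative interiors meet *)
    assume "\<tau> = 0"
    have sep0: "u \<bullet> z2 \<le> u \<bullet> z1" if z1: "z1 \<in> fst ` F" and z2: "z2 \<in> E" for z1 z2
    proof -
      obtain p where "p \<in> F" and "z1 = fst p"
        using z1 by blast
      then have "0 \<le> u \<bullet> (z1 - z2) + \<tau> * (snd p + 1)"
        using sep z2 by simp
      then show ?thesis
        using \<open>\<tau> = 0\<close> by (simp add: inner_diff_right)
    qed
    have "z1' \<in> fst ` F"
      using \<open>(z1', t') \<in> F\<close> by (metis fst_conv imageI)
    then have "u \<bullet> z1' = u \<bullet> z2'"
      using \<open>z2' \<in> E\<close> sep0
      by (intro improper_separation_rel_interior[OF convex_linear_image[OF linear_fst assms(1)] assms(2) ri])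
        auto
    then show False
      using strict \<open>\<tau> = 0\<close> by (simp add: inner_diff_right)
  qed
  ultimately show ?thesis
    by simp
qed

lemma convex_decoupling_normal:
  fixes F :: "('a::euclidean_space \<times> real) set" and E :: "'a set"
  assumes "convex F" and "convex E"
    and ri: "rel_interior (fst ` F) \<inter> rel_interior E \<noteq> {}"
    and nonneg: "\<And>z t. (z, t) \<in> F \<Longrightarrow> z \<in> E \<Longrightarrow> 0 \<le> t"
  shows "\<exists>n. \<forall>z1 t z2. (z1, t) \<in> F \<longrightarrow> z2 \<in> E \<longrightarrow> 0 \<le> n \<bullet> (z1 - z2) + t"
proof -
  obtain z0 where "z0 \<in> fst ` F" and "z0 \<in> E"
    using ri rel_interior_subset by blast
  then obtain t0 where "(z0, t0) \<in> F"
    by (metis imageE prod.collapse)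
  have "\<exists>u \<tau>. (\<forall>z1 t z2 r. (z1, t) \<in> F \<longrightarrow> z2 \<in> E \<longrightarrow> 0 < r \<longrightarrow> 0 \<le> u \<bullet> (z1 - z2) + \<tau> * (t + r))
    \<and> (\<exists>z1 t z2 r. (z1, t) \<in> F \<and> z2 \<in> E \<and> 0 < u \<bullet> (z1 - z2) + \<tau> * (t + r))"
    by (rule convex_decoupling_separator[OF assms(1,2) \<open>(z0, t0) \<in> F\<close> \<open>z0 \<in> E\<close>]) (rule nonneg)
  then obtain u \<tau> z1' t' z2' r' where
      sep: "\<forall>z1 t z2 r. (z1, t) \<in> F \<longrightarrow> z2 \<in> E \<longrightarrow> 0 < r \<longrightarrow> 0 \<le> u \<bullet> (z1 - z2) + \<tau> * (t + r)"
    and "(z1', t') \<in> F" and "z2' \<in> E" and "0 < u \<bullet> (z1' - z2') + \<tau> * (t' + r')"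
    by blast
  then have "0 < \<tau>"
    by (rule decoupling_separator_vertical_pos[OF assms(1,2) ri])
  have "0 \<le> (u /\<^sub>R \<tau>) \<bullet> (z1 - z2) + t" if "(z1, t) \<in> F" and "z2 \<in> E" for z1 t z2
  proof (rule field_le_epsilon)
    fix r :: real assume "0 < r"
    have "0 \<le> (u \<bullet> (z1 - z2) + \<tau> * (t + r)) / \<tau>"
      using sep that \<open>0 < r\<close> \<open>0 < \<tau>\<close> by simp
    then show "0 \<le> (u /\<^sub>R \<tau>) \<bullet> (z1 - z2) + t + r"
      using \<open>0 < \<tau>\<close> by (simp add: field_simps)
  qed
  then show ?thesis
    by blast
qed

lemma mem_eps_subdiff_iff:
  assumes "\<psi> zb = ereal c"
  shows "\<zeta> \<in> eps_subdiff \<psi> \<gamma> zb \<longleftrightarrow> (\<forall>z. ereal (\<zeta> \<bullet> (z - zb) - \<gamma>) \<le> \<psi> z - ereal c)"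
  by (simp add: eps_subdiff_def assms)

lemma eps_subdiff_base_finite:
  assumes "\<zeta> \<in> eps_subdiff \<psi> \<gamma> zb"
  shows "\<exists>c. \<psi> zb = ereal c"
  using assms by (cases "\<psi> zb") (auto simp: eps_subdiff_def)

(* The function \<phi> + \<delta>_\<Omega>, with \<delta>_\<Omega> the indicator function of convex analysis
  (0 on \<Omega>, \<infinity> elsewhere), not the 0/1-valued indicator of HOL. *)
definition plus_indicator :: "('a \<Rightarrow> ereal) \<Rightarrow> 'a set \<Rightarrow> 'a \<Rightarrow> ereal" where
  "plus_indicator \<phi> \<Omega> z = (if z \<in> \<Omega> then \<phi> z else \<infinity>)"

lemma eps_subdiff_normal_split:
  fixes \<phi> :: "'a::real_inner \<Rightarrow> ereal"
  assumes "zb \<in> \<Omega>" and "\<phi> zb = ereal c"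
    and decoupled: "\<And>z s z2. \<phi> z \<le> ereal s \<Longrightarrow> z2 \<in> \<Omega> \<Longrightarrow>
      n \<bullet> (z2 - zb) + (\<zeta> - n) \<bullet> (z - zb) - \<gamma> \<le> s - c"
  shows "\<exists>(g1, g2)\<in>Gamma_set \<gamma>. \<zeta> \<in> eps_subdiff \<phi> g1 zb + eps_normal g2 zb \<Omega>"
proof -
  define g2 where "g2 = (SUP z2\<in>\<Omega>. n \<bullet> (z2 - zb))"
  have g2_least: "g2 \<le> s - c - (\<zeta> - n) \<bullet> (z - zb) + \<gamma>" if "\<phi> z \<le> ereal s" for z s
    unfolding g2_def using decoupled[OF that] assms(1) by (intro cSUP_least) force+
  have "bdd_above ((\<lambda>z2. n \<bullet> (z2 - zb)) ` \<Omega>)"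
    using decoupled[of zb c] assms(2) by (intro bdd_aboveI2) force
  then have g2_upper: "n \<bullet> (z2 - zb) \<le> g2" if "z2 \<in> \<Omega>" for z2
    unfolding g2_def using that by (rule cSUP_upper2) simp
  have "0 \<le> g2"
    using g2_upper[OF assms(1)] by simp
  moreover have "g2 \<le> \<gamma>"
    using g2_least[of zb c] assms(2) by simp
  moreover have "n \<in> eps_normal g2 zb \<Omega>"
    using assms(1) g2_upper by (simp add: eps_normal_def)
  moreover have "\<zeta> - n \<in> eps_subdiff \<phi> (\<gamma> - g2) zb"
    unfolding mem_eps_subdiff_iff[where \<psi> = \<phi>, OF assms(2)]
  proof
    fix z
    show "ereal ((\<zeta> - n) \<bullet> (z - zb) - (\<gamma> - g2)) \<le> \<phi> z - ereal c"
    proof (cases "\<phi> z")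
      case (real s)
      then show ?thesis
        using g2_least[of z s] by simp
    next
      case MInf
      then show ?thesis
        using g2_least[of z "(\<zeta> - n) \<bullet> (z - zb) - \<gamma> + g2 + c - 1"] by simp
    qed simp
  qed
  ultimately have "(\<gamma> - g2, g2) \<in> Gamma_set \<gamma>"
    and "\<zeta> \<in> eps_subdiff \<phi> (\<gamma> - g2) zb + eps_normal g2 zb \<Omega>"
    using set_plus_intro[of "\<zeta> - n" _ n] by (auto simp: Gamma_set_def)
  then show ?thesis
    by blast
qed

lemma eps_subdiff_plus_eps_normal_subset:
  "eps_subdiff \<phi> g1 zb + eps_normal g2 zb \<Omega> \<subseteq> eps_subdiff (plus_indicator \<phi> \<Omega>) (g1 + g2) zb"
proof
  fix \<zeta> assume "\<zeta> \<in> eps_subdiff \<phi> g1 zb + eps_normal g2 zb \<Omega>"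
  then obtain p q where p: "p \<in> eps_subdiff \<phi> g1 zb" and q: "q \<in> eps_normal g2 zb \<Omega>"
    and "\<zeta> = p + q"
    by (rule set_plus_elim)
  obtain c where c: "\<phi> zb = ereal c"
    using eps_subdiff_base_finite[OF p] by blast
  have "zb \<in> \<Omega>"
    using q by (simp add: eps_normal_def split: if_splits)
  then have c': "plus_indicator \<phi> \<Omega> zb = ereal c"
    using c by (simp add: plus_indicator_def)
  have "ereal (\<zeta> \<bullet> (z - zb) - (g1 + g2)) \<le> plus_indicator \<phi> \<Omega> z - ereal c" for z
  proof (cases "z \<in> \<Omega>")
    case True
    then have "q \<bullet> (z - zb) \<le> g2"
      using q \<open>zb \<in> \<Omega>\<close> by (simp add: eps_normal_def)
    then have "ereal (\<zeta> \<bullet> (z - zb) - (g1 + g2)) \<le> ereal (p \<bullet> (z - zb) - g1)"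
      using \<open>\<zeta> = p + q\<close> by (simp add: inner_add_left)
    also have "\<dots> \<le> \<phi> z - ereal c"
      using p by (simp add: mem_eps_subdiff_iff[where \<psi> = \<phi>, OF c])
    finally show ?thesis
      using True by (simp add: plus_indicator_def)
  qed (simp add: plus_indicator_def)
  then show "\<zeta> \<in> eps_subdiff (plus_indicator \<phi> \<Omega>) (g1 + g2) zb"
    by (simp add: mem_eps_subdiff_iff[where \<psi> = "plus_indicator \<phi> \<Omega>", OF c'])
qed

lemma nearly_convex_decoupling_normal:
  fixes \<phi> :: "'a::euclidean_space \<Rightarrow> ereal"
  assumes "nearly_convex_fun \<phi>" and "nearly_convex \<Omega>"
    and qual: "rel_interior (edom \<phi>) \<inter> rel_interior \<Omega> \<noteq> {}"
    and nonneg: "\<forall>(z, s)\<in>epigraph \<phi>. z \<in> \<Omega> \<longrightarrow> 0 \<le> s + a \<bullet> z + b"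
  shows "\<exists>n. \<forall>(z, s)\<in>epigraph \<phi>. \<forall>z2\<in>\<Omega>. 0 \<le> n \<bullet> (z - z2) + (s + a \<bullet> z + b)"
proof -
  obtain E1 where "convex E1" and E1: "E1 \<subseteq> epigraph \<phi>" "epigraph \<phi> \<subseteq> closure E1"
    using assms(1) unfolding nearly_convex_fun_def nearly_convex_def by blast
  obtain E2 where "convex E2" and E2: "E2 \<subseteq> \<Omega>" "\<Omega> \<subseteq> closure E2"
    using assms(2) unfolding nearly_convex_def by blast
  define F where "F = (\<lambda>(z, s). (z, s + a \<bullet> z + b)) ` E1"
  have "convex F"
    unfolding F_def using \<open>convex E1\<close> by (rule convex_shear_image)
  moreover have "fst ` F = fst ` E1"
    unfolding F_def image_image by (simp add: case_prod_unfold)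
  then have "rel_interior (fst ` F) \<inter> rel_interior E2 \<noteq> {}"
    using qual rel_interior_edom_subset[OF \<open>convex E1\<close> E1]
      rel_interior_nearly_convex_subset[OF \<open>convex E2\<close> E2] by auto
  moreover have "0 \<le> t" if zt: "(z, t) \<in> F" and z: "z \<in> E2" for z t
  proof -
    obtain s where "(z, s) \<in> E1" and t: "t = s + a \<bullet> z + b"
      using zt unfolding F_def by auto
    then have "(z, s) \<in> epigraph \<phi>" and "z \<in> \<Omega>"
      using E1(1) E2(1) z by blast+
    then show ?thesis
      using nonneg t by auto
  qed
  ultimately obtain n where n: "\<forall>z1 t z2. (z1, t) \<in> F \<longrightarrow> z2 \<in> E2 \<longrightarrow> 0 \<le> n \<bullet> (z1 - z2) + t"
    using convex_decoupling_normal[OF _ \<open>convex E2\<close>] by blast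
  have "0 \<le> n \<bullet> (z - z2) + (s + a \<bullet> z + b)" if "(z, s) \<in> E1" and "z2 \<in> E2" for z s z2
  proof -
    have "(z, s + a \<bullet> z + b) \<in> F"
      unfolding F_def using that(1) by (rule rev_image_eqI) simp
    then show ?thesis
      using n that(2) by blast
  qed
  then have "closure (E1 \<times> E2) \<subseteq> {((z, s), z2). 0 \<le> n \<bullet> (z - z2) + (s + a \<bullet> z + b)}"
    by (intro closure_minimal) (auto simp: case_prod_unfold intro!: closed_Collect_le continuous_intros)
  moreover have "epigraph \<phi> \<times> \<Omega> \<subseteq> closure (E1 \<times> E2)"
    using E1(2) E2(2) by (auto simp: closure_Times)
  ultimately show ?thesis
    by blast
qed

lemma eps_subdiff_plus_indicator_subset:
  fixes \<phi> :: "'a::euclidean_space \<Rightarrow> ereal"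
  assumes "nearly_convex_fun \<phi>" and "nearly_convex \<Omega>"
    and "rel_interior (edom \<phi>) \<inter> rel_interior \<Omega> \<noteq> {}"
  shows "eps_subdiff (plus_indicator \<phi> \<Omega>) \<gamma> zb
    \<subseteq> (\<Union>(g1, g2)\<in>Gamma_set \<gamma>. eps_subdiff \<phi> g1 zb + eps_normal g2 zb \<Omega>)"
proof
  fix \<zeta> assume \<zeta>: "\<zeta> \<in> eps_subdiff (plus_indicator \<phi> \<Omega>) \<gamma> zb"
  then obtain c where c': "plus_indicator \<phi> \<Omega> zb = ereal c"
    using eps_subdiff_base_finite by blast
  then have "zb \<in> \<Omega>" and c: "\<phi> zb = ereal c"
    by (simp_all add: plus_indicator_def split: if_splits)
  have sub: "ereal (\<zeta> \<bullet> (z - zb) - \<gamma>) \<le> \<phi> z - ereal c" if "z \<in> \<Omega>" for z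
    using \<zeta> that unfolding mem_eps_subdiff_iff[where \<psi> = "plus_indicator \<phi> \<Omega>", OF c']
    by (metis plus_indicator_def)
  have nonneg: "0 \<le> s + (- \<zeta>) \<bullet> z + (\<gamma> - c + \<zeta> \<bullet> zb)" if "\<phi> z \<le> ereal s" and "z \<in> \<Omega>" for z s
  proof -
    have "ereal (\<zeta> \<bullet> (z - zb) - \<gamma>) \<le> ereal s - ereal c"
      using sub[OF that(2)] ereal_minus_mono[OF that(1) order.refl] by (rule order_trans)
    then show ?thesis
      by (simp add: inner_diff_right)
  qed
  then have "\<forall>(z, s)\<in>epigraph \<phi>. z \<in> \<Omega> \<longrightarrow> 0 \<le> s + (- \<zeta>) \<bullet> z + (\<gamma> - c + \<zeta> \<bullet> zb)"
    by (auto simp: epigraph_def)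
  then obtain n where
    n: "\<forall>(z, s)\<in>epigraph \<phi>. \<forall>z2\<in>\<Omega>. 0 \<le> n \<bullet> (z - z2) + (s + (- \<zeta>) \<bullet> z + (\<gamma> - c + \<zeta> \<bullet> zb))"
    using nearly_convex_decoupling_normal[OF assms] by blast
  have "n \<bullet> (z2 - zb) + (\<zeta> - n) \<bullet> (z - zb) - \<gamma> \<le> s - c"
    if "\<phi> z \<le> ereal s" and "z2 \<in> \<Omega>" for z s z2
  proof -
    have "0 \<le> n \<bullet> (z - z2) + (s + (- \<zeta>) \<bullet> z + (\<gamma> - c + \<zeta> \<bullet> zb))"
      using n that by (auto simp: epigraph_def)
    then show ?thesis
      unfolding inner_diff_right inner_diff_left inner_minus_left by linarith
  qed
  then have "\<exists>(g1, g2)\<in>Gamma_set \<gamma>. \<zeta> \<in> eps_subdiff \<phi> g1 zb + eps_normal g2 zb \<Omega>"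
    by (rule eps_subdiff_normal_split[where \<phi> = \<phi>, OF \<open>zb \<in> \<Omega>\<close> c])
  then show "\<zeta> \<in> (\<Union>(g1, g2)\<in>Gamma_set \<gamma>. eps_subdiff \<phi> g1 zb + eps_normal g2 zb \<Omega>)"
    by auto
qed

lemma eps_subdiff_plus_indicator_eq:
  fixes \<phi> :: "'a::euclidean_space \<Rightarrow> ereal"
  assumes "nearly_convex_fun \<phi>" and "nearly_convex \<Omega>"
    and "rel_interior (edom \<phi>) \<inter> rel_interior \<Omega> \<noteq> {}"
  shows "eps_subdiff (plus_indicator \<phi> \<Omega>) \<gamma> zb
    = (\<Union>(g1, g2)\<in>Gamma_set \<gamma>. eps_subdiff \<phi> g1 zb + eps_normal g2 zb \<Omega>)"
proof
  show "(\<Union>(g1, g2)\<in>Gamma_set \<gamma>. eps_subdiff \<phi> g1 zb + eps_normal g2 zb \<Omega>)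
    \<subseteq> eps_subdiff (plus_indicator \<phi> \<Omega>) \<gamma> zb"
    using eps_subdiff_plus_eps_normal_subset by (force simp: Gamma_set_def)
qed (rule eps_subdiff_plus_indicator_subset[OF assms])

lemma marginal_le:
  assumes "y \<in> G x"
  shows "marginal f G x \<le> f (x, y)"
  unfolding marginal_def using assms by (blast intro: Inf_lower)

lemma S_eta_nonempty:
  assumes "marginal f G xb = ereal m" and "0 < \<eta>"
  shows "S_eta f G \<eta> xb \<noteq> {}"
proof -
  have "Inf {f (xb, y) | y. y \<in> G xb} < ereal m + ereal \<eta>"
    using assms unfolding marginal_def by simp
  then obtain y where "y \<in> G xb" and "f (xb, y) < ereal m + ereal \<eta>"
    unfolding Inf_less_iff by blast
  then show ?thesis
    unfolding S_eta_def assms(1) by force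
qed

lemma eps_subdiff_marginal_lift:
  assumes \<xi>: "\<xi> \<in> eps_subdiff (marginal f G) \<epsilon> xb" and "y \<in> S_eta f G \<eta> xb"
  shows "(\<xi>, 0) \<in> eps_subdiff (plus_indicator f (gph G)) (\<eta> + \<epsilon>) (xb, y)"
proof -
  obtain m where m: "marginal f G xb = ereal m"
    using eps_subdiff_base_finite[OF \<xi>] by blast
  have "y \<in> G xb" and "f (xb, y) \<le> ereal (m + \<eta>)"
    using assms(2) by (simp_all add: S_eta_def m)
  moreover have "ereal m \<le> f (xb, y)"
    using marginal_le[where G = G and f = f, OF \<open>y \<in> G xb\<close>] m by simp
  ultimately obtain c where c: "f (xb, y) = ereal c" and "c \<le> m + \<eta>"
    by (cases "f (xb, y)") auto
  have c': "plus_indicator f (gph G) (xb, y) = ereal c"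
    using c \<open>y \<in> G xb\<close> by (simp add: plus_indicator_def gph_def)
  have "ereal ((\<xi>, 0) \<bullet> ((x, y') - (xb, y)) - (\<eta> + \<epsilon>)) \<le> plus_indicator f (gph G) (x, y') - ereal c"
    for x y'
  proof (cases "y' \<in> G x")
    case True
    have "ereal (\<xi> \<bullet> (x - xb) - \<epsilon>) \<le> marginal f G x - ereal m"
      using \<xi> by (simp add: mem_eps_subdiff_iff[where \<psi> = "marginal f G", OF m])
    also have "\<dots> \<le> f (x, y') - ereal m"
      using marginal_le[where G = G and f = f, OF True] by (rule ereal_minus_mono) simp
    finally show ?thesis
      using True \<open>c \<le> m + \<eta>\<close> by (cases "f (x, y')") (auto simp: plus_indicator_def gph_def inner_Pair)
  qed (simp add: plus_indicator_def gph_def)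
  then show ?thesis
    unfolding mem_eps_subdiff_iff[where \<psi> = "plus_indicator f (gph G)", OF c'] by simp
qed

lemma eps_subdiff_lift_lower_bound:
  assumes \<xi>: "(\<xi>, 0) \<in> eps_subdiff (plus_indicator f (gph G)) \<delta> (xb, y)"
    and m: "marginal f G xb = ereal m" and "y' \<in> G x"
  shows "ereal (\<xi> \<bullet> (x - xb) - \<delta> + m) \<le> f (x, y')"
proof -
  obtain c where c': "plus_indicator f (gph G) (xb, y) = ereal c"
    using eps_subdiff_base_finite[OF \<xi>] by blast
  then have "y \<in> G xb" and "f (xb, y) = ereal c"
    by (simp_all add: plus_indicator_def gph_def split: if_splits)
  then have "m \<le> c"
    using marginal_le[where G = G and f = f, OF \<open>y \<in> G xb\<close>] m by simp
  have "ereal ((\<xi>, 0) \<bullet> ((x, y') - (xb, y)) - \<delta>) \<le> plus_indicator f (gph G) (x, y') - ereal c"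
    using \<xi> by (simp add: mem_eps_subdiff_iff[where \<psi> = "plus_indicator f (gph G)", OF c'])
  then have "ereal (\<xi> \<bullet> (x - xb) - \<delta>) \<le> f (x, y') - ereal c"
    using \<open>y' \<in> G x\<close> by (simp add: plus_indicator_def gph_def inner_Pair)
  then show ?thesis
    using \<open>m \<le> c\<close> by (cases "f (x, y')") auto
qed

lemma eps_subdiff_marginal_of_lifts:
  assumes m: "marginal f G xb = ereal m"
    and lift: "\<And>\<eta>. 0 < \<eta> \<Longrightarrow> \<exists>y. (\<xi>, 0) \<in> eps_subdiff (plus_indicator f (gph G)) (\<eta> + \<epsilon>) (xb, y)"
  shows "\<xi> \<in> eps_subdiff (marginal f G) \<epsilon> xb"
proof -
  have "ereal (\<xi> \<bullet> (x - xb) - \<epsilon> + m) \<le> f (x, y')" if "y' \<in> G x" for x y'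
  proof (rule ereal_le_epsilon2)
    fix \<eta> :: real assume "0 < \<eta>"
    then obtain y where "(\<xi>, 0) \<in> eps_subdiff (plus_indicator f (gph G)) (\<eta> + \<epsilon>) (xb, y)"
      using lift by blast
    then have "ereal (\<xi> \<bullet> (x - xb) - (\<eta> + \<epsilon>) + m) \<le> f (x, y')"
      using m that by (rule eps_subdiff_lift_lower_bound)
    then show "ereal (\<xi> \<bullet> (x - xb) - \<epsilon> + m) \<le> f (x, y') + ereal \<eta>"
      by (cases "f (x, y')") auto
  qed
  then have marginal_lower: "ereal (\<xi> \<bullet> (x - xb) - \<epsilon> + m) \<le> marginal f G x" for x
    unfolding marginal_def by (blast intro: Inf_greatest)
  have "ereal (\<xi> \<bullet> (x - xb) - \<epsilon>) \<le> marginal f G x - ereal m" for x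
    using marginal_lower[of x] by (cases "marginal f G x") auto
  then show ?thesis
    by (simp add: mem_eps_subdiff_iff[where \<psi> = "marginal f G", OF m])
qed

theorem mainTheorem11:
  fixes f :: "('a::euclidean_space \<times> 'b::euclidean_space) \<Rightarrow> ereal"
    and G :: "'a \<Rightarrow> 'b set"
    and xb :: 'a
    and \<epsilon> :: real
  assumes "proper_fun f" and "nearly_convex_fun f" and "nearly_convex_map G"
    and "\<bar>marginal f G xb\<bar> \<noteq> \<infinity>"
    and "rel_interior (edom f) \<inter> rel_interior (gph G) \<noteq> {}"
    and "\<epsilon> \<ge> 0"
  shows "eps_subdiff (marginal f G) \<epsilon> xb =
           (\<Inter>\<eta>\<in>{0<..}. \<Inter>y\<in>S_eta f G \<eta> xb. \<Union>(g1, g2)\<in>Gamma_set (\<eta> + \<epsilon>).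
              {\<xi>. (\<xi>, 0) \<in> eps_subdiff f g1 (xb, y) + eps_normal g2 (xb, y) (gph G)})
       \<and> eps_subdiff (marginal f G) \<epsilon> xb =
           (\<Inter>\<eta>\<in>{0<..}. \<Union>y. \<Union>(g1, g2)\<in>Gamma_set (\<eta> + \<epsilon>).
              {\<xi>. (\<xi>, 0) \<in> eps_subdiff f g1 (xb, y) + eps_normal g2 (xb, y) (gph G)})"
proof -
  obtain m where m: "marginal f G xb = ereal m"
    using assms(4) by (cases "marginal f G xb") auto
  let ?lift = "\<lambda>\<delta> y. {\<xi>. (\<xi>, 0) \<in> eps_subdiff (plus_indicator f (gph G)) \<delta> (xb, y)}"
  have sum_rule: "(\<Union>(g1, g2)\<in>Gamma_set \<delta>.
      {\<xi>. (\<xi>, 0) \<in> eps_subdiff f g1 (xb, y) + eps_normal g2 (xb, y) (gph G)}) = ?lift \<delta> y" for \<delta> y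
    unfolding eps_subdiff_plus_indicator_eq[OF assms(2) assms(3)[unfolded nearly_convex_map_def] assms(5)]
    by blast
  have lift_near_optimal:
    "eps_subdiff (marginal f G) \<epsilon> xb \<subseteq> (\<Inter>\<eta>\<in>{0<..}. \<Inter>y\<in>S_eta f G \<eta> xb. ?lift (\<eta> + \<epsilon>) y)"
    by (intro subsetI INT_I CollectI eps_subdiff_marginal_lift)
  have some_near_optimal: "(\<Inter>\<eta>\<in>{0<..}. \<Inter>y\<in>S_eta f G \<eta> xb. ?lift (\<eta> + \<epsilon>) y)
      \<subseteq> (\<Inter>\<eta>\<in>{0<..}. \<Union>y. ?lift (\<eta> + \<epsilon>) y)"
  proof (intro subsetI INT_I)
    fix \<xi> and \<eta> :: real
    assume \<xi>: "\<xi> \<in> (\<Inter>\<eta>\<in>{0<..}. \<Inter>y\<in>S_eta f G \<eta> xb. ?lift (\<eta> + \<epsilon>) y)"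
      and \<eta>: "\<eta> \<in> {0<..}"
    obtain y where "y \<in> S_eta f G \<eta> xb"
      using S_eta_nonempty[OF m] \<eta> by fastforce
    then show "\<xi> \<in> (\<Union>y. ?lift (\<eta> + \<epsilon>) y)"
      using \<xi> \<eta> by blast
  qed
  have of_lifts: "(\<Inter>\<eta>\<in>{0<..}. \<Union>y. ?lift (\<eta> + \<epsilon>) y) \<subseteq> eps_subdiff (marginal f G) \<epsilon> xb"
    by (intro subsetI eps_subdiff_marginal_of_lifts[OF m]) auto
  show ?thesis
    unfolding sum_rule
    using subset_antisym[OF lift_near_optimal order_trans[OF some_near_optimal of_lifts]]
      subset_antisym[OF order_trans[OF lift_near_optimal some_near_optimal] of_lifts]
    by (rule conjI)
qed

end
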